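(* Let $(\Omega,\mathcal{F},\mathbb{P})$ be a complete probability space, $c$ a random cost vector in a compact convex $\mathcal{C}\subseteq\mathbb{R}^d$ with $\mathbb{E}[\|c\|^2]<\infty$ and absolutely continuous law, $\mathcal{Z}\subseteq\mathbb{R}^d$ non-empty compact (full-row-rank constraint matrix if polyhedral), and $\pi^*:\mathcal{C}\to\mathcal{Z}$ measurable, $L$-Lipschitz, with $\mathbb{E}[\|\pi^*(c)\|^2]<\infty$ and $\pi^*(c)\in\arg\min_{z\in\mathcal{Z}}c^\top z$ a.s. Let $\hat{\mathbb{E}}[c]$ be an estimator of $\mathbb{E}[c]$ based on an i.i.d. sample of size $n$ satisfying $\hat{\mathbb{E}}[c]\to\mathbb{E}[c]$ in probability, $\|\hat{\mathbb{E}}[c]-\mathbb{E}[c]\|=\mathcal{O}_P(n^{-1/2})$, and $\sqrt n(\hat{\mathbb{E}}[c]-\mathbb{E}[c])\to\mathcal{N}(0,\Sigma_c)$ in distribution. Then $$\mathrm{Regret}(c,\pi^*(\hat{\mathbb{E}}[c]))=\mathrm{Cov}(c,\pi^*(c))+R(c)+\mathcal{O}_P(n^{-1/2}).$$ If in addition $R(c)=0$, this becomes $\mathrm{Cov}(c,\pi^*(c))+\mathcal{O}_P(n^{-1/2})$.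
   Context: $\mathrm{Regret}(c,\pi^*(\hat{\mathbb{E}}[c]))=\mathbb{E}[c^\top\pi^*(c)]-\mathbb{E}[c^\top\pi^*(\hat{\mathbb{E}}[c])]$; $\mathrm{Cov}(c,\pi^*(c))=\mathbb{E}[c^\top\pi^*(c)]-\mathbb{E}[c]^\top\mathbb{E}[\pi^*(c)]$; $R(c)=\mathbb{E}[c]^\top(\mathbb{E}[\pi^*(c)]-\pi^*(\mathbb{E}[c]))$; $\Sigma_c$ is the covariance matrix of $c$. *)

theory Defs
  imports "HOL-Probability.Probability"
begin

text \<open>Outer-probability bound: the (possibly non-measurable) event S is contained
  in a measurable event of probability at most e.\<close>
definition prob_le :: "'a measure \<Rightarrow> 'a set \<Rightarrow> real \<Rightarrow> bool" where
  "prob_le M S e \<longleftrightarrow> (\<exists>A\<in>sets M. S \<inter> space M \<subseteq> A \<and> measure M A \<le> e)"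

definition bigOP :: "'a measure \<Rightarrow> (nat \<Rightarrow> 'a \<Rightarrow> 'b::real_normed_vector) \<Rightarrow> (nat \<Rightarrow> real) \<Rightarrow> bool" where
  "bigOP M Y a \<longleftrightarrow> (\<forall>e>0. \<exists>K N0. \<forall>n\<ge>N0.
      prob_le M {\<omega> \<in> space M. norm (Y n \<omega>) > K * a n} e)"

definition conv_in_prob :: "'a measure \<Rightarrow> (nat \<Rightarrow> 'a \<Rightarrow> 'b::metric_space) \<Rightarrow> 'b \<Rightarrow> bool" where
  "conv_in_prob M Y y \<longleftrightarrow> (\<forall>e>0. \<forall>\<delta>>0. \<exists>N0. \<forall>n\<ge>N0.
      prob_le M {\<omega> \<in> space M. dist (Y n \<omega>) y > e} \<delta>)"

definition weak_conv_vec :: "(nat \<Rightarrow> (real^'d) measure) \<Rightarrow> (real^'d) measure \<Rightarrow> bool" where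
  "weak_conv_vec \<mu>s \<mu> \<longleftrightarrow> (\<forall>f :: real^'d \<Rightarrow> real. continuous_on UNIV f \<and> bounded (range f) \<longrightarrow>
      (\<lambda>n. integral\<^sup>L (\<mu>s n) f) \<longlonglongrightarrow> integral\<^sup>L \<mu> f)"

text \<open>Centered (possibly degenerate) multivariate normal law N(0, Sigma) on R^d,
  defined via its one-dimensional projections (Cramer--Wold): a.x ~ N(0, a' Sigma a).\<close>
definition is_mv_normal :: "(real^'d) measure \<Rightarrow> real^'d^'d \<Rightarrow> bool" where
  "is_mv_normal \<mu> \<Sigma> \<longleftrightarrow> prob_space \<mu> \<and> sets \<mu> = sets borel \<and>
     (\<forall>a. let v = a \<bullet> (\<Sigma> *v a) in
        distr \<mu> borel (\<lambda>x. a \<bullet> x) =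
          (if v = 0 then return borel 0 else density lborel (normal_density 0 (sqrt v))))"

definition cov_matrix :: "'a measure \<Rightarrow> ('a \<Rightarrow> real^'d) \<Rightarrow> real^'d^'d" where
  "cov_matrix M c = (\<chi> i j. integral\<^sup>L M (\<lambda>x. (c x $ i - integral\<^sup>L M (\<lambda>y. c y $ i)) *
                                               (c x $ j - integral\<^sup>L M (\<lambda>y. c y $ j))))"

text \<open>Regret of the plug-in decision pi(Ehat), conditional on the sample:
  E[c' pi(c)] - E_c[c' pi(Ehat)], with the estimate held fixed.\<close>
definition regret :: "'a measure \<Rightarrow> ('a \<Rightarrow> real^'d) \<Rightarrow> (real^'d \<Rightarrow> real^'d) \<Rightarrow> real^'d \<Rightarrow> real" where
  "regret M c \<pi> e = integral\<^sup>L M (\<lambda>x. c x \<bullet> \<pi> (c x)) - integral\<^sup>L M (\<lambda>x. c x \<bullet> \<pi> e)"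

definition Cov_term :: "'a measure \<Rightarrow> ('a \<Rightarrow> real^'d) \<Rightarrow> (real^'d \<Rightarrow> real^'d) \<Rightarrow> real" where
  "Cov_term M c \<pi> = integral\<^sup>L M (\<lambda>x. c x \<bullet> \<pi> (c x))
      - integral\<^sup>L M c \<bullet> integral\<^sup>L M (\<lambda>x. \<pi> (c x))"

definition R_term :: "'a measure \<Rightarrow> ('a \<Rightarrow> real^'d) \<Rightarrow> (real^'d \<Rightarrow> real^'d) \<Rightarrow> real" where
  "R_term M c \<pi> = integral\<^sup>L M c \<bullet> (integral\<^sup>L M (\<lambda>x. \<pi> (c x)) - \<pi> (integral\<^sup>L M c))"

end

theory Submission
  imports Defs
begin

text \<open>Writing m for the mean of c, the three terms telescope: the regret minus the covariance
  and R terms equals m \<bullet> (\<pi> m - \<pi> (Ehat n)). Since the estimates stay in C and converge to m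
  in probability, m lies in the closed set C, so Lipschitz continuity of \<pi> on C bounds this
  remainder by norm m * L * norm (Ehat n - m), which is O_P(n^(-1/2)) by assumption.\<close>

lemma prob_le_mono:
  assumes "S \<inter> space M \<subseteq> T \<inter> space M" and "prob_le M T e"
  shows "prob_le M S e"
  using assms unfolding prob_le_def by blast

lemma (in prob_space) prob_le_space_ge_1:
  assumes "prob_le M (space M) e"
  shows "1 \<le> e"
proof -
  obtain A where "A \<in> sets M" "space M \<subseteq> A" "measure M A \<le> e"
    using assms unfolding prob_le_def by auto
  then have "A = space M" using sets.sets_into_space by blast
  with \<open>measure M A \<le> e\<close> show ?thesis by (simp add: prob_space)
qed

lemma (in prob_space) conv_in_prob_limit_in_closed:
  assumes "closed S" and "\<And>n \<omega>. \<omega> \<in> space M \<Longrightarrow> Y n \<omega> \<in> S"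
    and "conv_in_prob M Y y"
  shows "y \<in> S"
proof (rule ccontr)
  assume "y \<notin> S"
  then obtain e where "e > 0" and "ball y e \<subseteq> - S"
    using assms(1) open_contains_ball[of "- S"] by blast
  then have far: "\<And>z. z \<in> S \<Longrightarrow> e \<le> dist z y"
    by (force simp: dist_commute subset_iff)
  obtain N0 where "\<forall>n\<ge>N0. prob_le M {\<omega> \<in> space M. dist (Y n \<omega>) y > e / 2} (1/2)"
    using assms(3) \<open>e > 0\<close> unfolding conv_in_prob_def by (meson half_gt_zero zero_less_one)
  then have "prob_le M {\<omega> \<in> space M. dist (Y N0 \<omega>) y > e / 2} (1/2)" by blast
  moreover have "e / 2 < dist (Y N0 \<omega>) y" if "\<omega> \<in> space M" for \<omega>
    using far[OF assms(2)[OF that, of N0]] \<open>e > 0\<close> by linarith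
  then have "{\<omega> \<in> space M. dist (Y N0 \<omega>) y > e / 2} = space M" by auto
  ultimately show False using prob_le_space_ge_1 by fastforce
qed

lemma bigOP_dominated:
  assumes "bigOP M Y a" and "0 \<le> k"
    and "\<And>n \<omega>. \<omega> \<in> space M \<Longrightarrow> norm (W n \<omega>) \<le> k * norm (Y n \<omega>)"
  shows "bigOP M W a"
  unfolding bigOP_def
proof (intro allI impI)
  fix e :: real assume "e > 0"
  with assms(1) obtain K N0
    where KN: "\<forall>n\<ge>N0. prob_le M {\<omega> \<in> space M. norm (Y n \<omega>) > K * a n} e"
    unfolding bigOP_def by blast
  have "prob_le M {\<omega> \<in> space M. norm (W n \<omega>) > (k * K) * a n} e" if "N0 \<le> n" for n
  proof (rule prob_le_mono[OF _ KN[rule_format, OF that]])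
    have "K * a n < norm (Y n \<omega>)" if "\<omega> \<in> space M" "norm (W n \<omega>) > (k * K) * a n" for \<omega>
    proof -
      have "k * (K * a n) < k * norm (Y n \<omega>)"
        using that assms(3)[OF that(1), of n] by (simp add: mult.assoc)
      then show ?thesis using assms(2) by (rule mult_left_less_imp_less)
    qed
    then show "{\<omega> \<in> space M. norm (W n \<omega>) > (k * K) * a n} \<inter> space M
        \<subseteq> {\<omega> \<in> space M. norm (Y n \<omega>) > K * a n} \<inter> space M" by blast
  qed
  then show "\<exists>K N0. \<forall>n\<ge>N0. prob_le M {\<omega> \<in> space M. norm (W n \<omega>) > K * a n} e" by blast
qed

lemma regret_minus_Cov_R_eq:
  assumes "integrable M c"
  shows "regret M c \<pi> e - Cov_term M c \<pi> - R_term M c \<pi>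
       = integral\<^sup>L M c \<bullet> (\<pi> (integral\<^sup>L M c) - \<pi> e)"
  using assms unfolding regret_def Cov_term_def R_term_def by (simp add: inner_diff_right)

lemma regret_minus_Cov_R_bound:
  assumes "integrable M c" and "L-lipschitz_on C \<pi>"
    and "integral\<^sup>L M c \<in> C" and "e \<in> C"
  shows "\<bar>regret M c \<pi> e - Cov_term M c \<pi> - R_term M c \<pi>\<bar>
       \<le> norm (integral\<^sup>L M c) * L * norm (e - integral\<^sup>L M c)"
proof -
  let ?m = "integral\<^sup>L M c"
  have "\<bar>regret M c \<pi> e - Cov_term M c \<pi> - R_term M c \<pi>\<bar> \<le> norm ?m * norm (\<pi> ?m - \<pi> e)"
    unfolding regret_minus_Cov_R_eq[OF assms(1)] by (rule Cauchy_Schwarz_ineq2)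
  also have "norm (\<pi> ?m - \<pi> e) \<le> L * norm (e - ?m)"
    using lipschitz_onD[OF assms(2-4)] by (simp add: dist_norm norm_minus_commute)
  finally show ?thesis by (simp add: mult_left_mono mult.assoc)
qed

theorem theorem3p10:
  fixes M :: "'a measure"
    and c :: "'a \<Rightarrow> real^'d"
    and X :: "nat \<Rightarrow> 'a \<Rightarrow> real^'d"
    and Ehat :: "nat \<Rightarrow> 'a \<Rightarrow> real^'d"
    and C Z :: "(real^'d) set"
    and \<pi> :: "real^'d \<Rightarrow> real^'d"
    and L :: real
  assumes "prob_space M" and "complete_measure M"
    and "compact C" and "convex C"
    and "c \<in> borel_measurable M" and "\<forall>\<omega>\<in>space M. c \<omega> \<in> C"
    and "integrable M (\<lambda>\<omega>. (norm (c \<omega>))\<^sup>2)"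
    and "absolutely_continuous lborel (distr M lborel c)"
    and "compact Z" and "Z \<noteq> {}"
    and "\<pi> ` C \<subseteq> Z"
    and "\<pi> \<in> borel_measurable (restrict_space borel C)"
    and "L-lipschitz_on C \<pi>"
    and "integrable M (\<lambda>\<omega>. (norm (\<pi> (c \<omega>)))\<^sup>2)"
    and "AE \<omega> in M. \<forall>z\<in>Z. c \<omega> \<bullet> \<pi> (c \<omega>) \<le> c \<omega> \<bullet> z"
    \<comment> \<open>i.i.d. sample X 0, X 1, ..., distributed as c and independent of the fresh cost c\<close>
    and "\<forall>k. X k \<in> borel_measurable M"
    and "\<forall>k. distr M borel (X k) = distr M borel c"
    and "prob_space.indep_vars M (\<lambda>_. borel)
           (\<lambda>i. case i of None \<Rightarrow> c | Some k \<Rightarrow> X k) UNIV"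
    \<comment> \<open>Ehat n is an estimator of E[c] based on the first n sample points\<close>
    and "\<forall>n. Ehat n \<in> borel_measurable M"
    and "\<forall>n. \<forall>\<omega>\<in>space M. \<forall>\<omega>'\<in>space M.
           (\<forall>i<n. X i \<omega> = X i \<omega>') \<longrightarrow> Ehat n \<omega> = Ehat n \<omega>'"
    and "\<forall>n. \<forall>\<omega>\<in>space M. Ehat n \<omega> \<in> C"
    and "conv_in_prob M Ehat (integral\<^sup>L M c)"
    and "bigOP M (\<lambda>n \<omega>. Ehat n \<omega> - integral\<^sup>L M c) (\<lambda>n. 1 / sqrt (real n))"
    and "weak_conv_vec
           (\<lambda>n. distr M borel (\<lambda>\<omega>. sqrt (real n) *\<^sub>R (Ehat n \<omega> - integral\<^sup>L M c)))
           \<mu>"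
    and "is_mv_normal \<mu> (cov_matrix M c)"
  shows "bigOP M (\<lambda>n \<omega>. regret M c \<pi> (Ehat n \<omega>) - Cov_term M c \<pi> - R_term M c \<pi>)
           (\<lambda>n. 1 / sqrt (real n))
       \<and> (R_term M c \<pi> = 0 \<longrightarrow>
          bigOP M (\<lambda>n \<omega>. regret M c \<pi> (Ehat n \<omega>) - Cov_term M c \<pi>)
           (\<lambda>n. 1 / sqrt (real n)))"
proof -
  interpret prob_space M by (rule assms(1))
  obtain B where "\<And>x. x \<in> C \<Longrightarrow> norm x \<le> B"
    using compact_imp_bounded[OF assms(3)] by (auto simp: bounded_iff)
  then have integrable_c: "integrable M c"
    using assms(5,6) by (intro integrable_const_bound[where B=B]) auto
  have mean_in_C: "integral\<^sup>L M c \<in> C"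
    by (rule conv_in_prob_limit_in_closed[OF compact_imp_closed[OF assms(3)] _ assms(22)])
      (use assms(21) in blast)
  have remainder_bound: "norm (regret M c \<pi> (Ehat n \<omega>) - Cov_term M c \<pi> - R_term M c \<pi>)
      \<le> (norm (integral\<^sup>L M c) * L) * norm (Ehat n \<omega> - integral\<^sup>L M c)"
    if "\<omega> \<in> space M" for n \<omega>
    unfolding real_norm_def
    by (rule regret_minus_Cov_R_bound[OF integrable_c assms(13) mean_in_C])
      (use assms(21) that in blast)
  have "0 \<le> norm (integral\<^sup>L M c) * L"
    using lipschitz_on_nonneg[OF assms(13)] by simp
  from bigOP_dominated[OF assms(23) this remainder_bound]
  have remainder_OP: "bigOP M (\<lambda>n \<omega>. regret M c \<pi> (Ehat n \<omega>) - Cov_term M c \<pi> - R_term M c \<pi>)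
      (\<lambda>n. 1 / sqrt (real n))" .
  moreover have "bigOP M (\<lambda>n \<omega>. regret M c \<pi> (Ehat n \<omega>) - Cov_term M c \<pi>) (\<lambda>n. 1 / sqrt (real n))"
    if "R_term M c \<pi> = 0"
    using that remainder_OP by simp
  ultimately show ?thesis by blast
qed

end
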